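(* Let $M$ be a principally Goldie*-lifting right $R$-module with $\mathrm{Rad}(M)\ll M$. Then $M/\mathrm{Rad}(M)$ is principally semisimple.
   Context: $R$ is an associative ring with identity; modules are unital right $R$-modules; $\mathrm{Rad}(M)$ is the Jacobson radical of $M$. $K\ll M$ means $K$ is small in $M$. A module is principally semisimple if every cyclic submodule is a direct summand. For submodules $X,Y$ of $M$, $X\,\beta^*\,Y$ means $(X+Y)/X\ll M/X$ and $(X+Y)/Y\ll M/Y$. $M$ is principally Goldie*-lifting if for every cyclic submodule $X$ of $M$ there is a direct summand $D$ of $M$ with $X\,\beta^*\,D$. *)

theory Defs
  imports "HOL-Algebra.Algebra"
begin

text \<open>A right R-module is given by an abelian group M
  (the additive structure of a ring record; its multiplicative fields are ignored)
  together with a right scalar action act :: element => scalar => element.\<close>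

definition right_module :: "('r,'c) ring_scheme \<Rightarrow> ('a,'m) ring_scheme \<Rightarrow> ('a \<Rightarrow> 'r \<Rightarrow> 'a) \<Rightarrow> bool" where
  "right_module R M act \<longleftrightarrow> ring R \<and> abelian_group M \<and>
     (\<forall>x\<in>carrier M. \<forall>r\<in>carrier R. act x r \<in> carrier M) \<and>
     (\<forall>x\<in>carrier M. \<forall>y\<in>carrier M. \<forall>r\<in>carrier R. act (x \<oplus>\<^bsub>M\<^esub> y) r = act x r \<oplus>\<^bsub>M\<^esub> act y r) \<and>
     (\<forall>x\<in>carrier M. \<forall>r\<in>carrier R. \<forall>s\<in>carrier R. act x (r \<oplus>\<^bsub>R\<^esub> s) = act x r \<oplus>\<^bsub>M\<^esub> act x s) \<and>
     (\<forall>x\<in>carrier M. \<forall>r\<in>carrier R. \<forall>s\<in>carrier R. act x (r \<otimes>\<^bsub>R\<^esub> s) = act (act x r) s) \<and>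
     (\<forall>x\<in>carrier M. act x \<one>\<^bsub>R\<^esub> = x)"

definition submod :: "('r,'c) ring_scheme \<Rightarrow> ('a,'m) ring_scheme \<Rightarrow> ('a \<Rightarrow> 'r \<Rightarrow> 'a) \<Rightarrow> 'a set \<Rightarrow> bool" where
  "submod R M act U \<longleftrightarrow> U \<subseteq> carrier M \<and> \<zero>\<^bsub>M\<^esub> \<in> U \<and>
     (\<forall>x\<in>U. \<forall>y\<in>U. x \<oplus>\<^bsub>M\<^esub> y \<in> U) \<and> (\<forall>x\<in>U. a_inv M x \<in> U) \<and>
     (\<forall>x\<in>U. \<forall>r\<in>carrier R. act x r \<in> U)"

definition msum :: "('a,'m) ring_scheme \<Rightarrow> 'a set \<Rightarrow> 'a set \<Rightarrow> 'a set" where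
  "msum M U V = {x \<oplus>\<^bsub>M\<^esub> y | x y. x \<in> U \<and> y \<in> V}"

definition small_sub :: "('r,'c) ring_scheme \<Rightarrow> ('a,'m) ring_scheme \<Rightarrow> ('a \<Rightarrow> 'r \<Rightarrow> 'a) \<Rightarrow> 'a set \<Rightarrow> bool" where
  "small_sub R M act K \<longleftrightarrow> submod R M act K \<and>
     (\<forall>L. submod R M act L \<and> msum M K L = carrier M \<longrightarrow> L = carrier M)"

definition maximal_sub :: "('r,'c) ring_scheme \<Rightarrow> ('a,'m) ring_scheme \<Rightarrow> ('a \<Rightarrow> 'r \<Rightarrow> 'a) \<Rightarrow> 'a set \<Rightarrow> bool" where
  "maximal_sub R M act K \<longleftrightarrow> submod R M act K \<and> K \<noteq> carrier M \<and>
     (\<forall>L. submod R M act L \<and> K \<subseteq> L \<longrightarrow> L = K \<or> L = carrier M)"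

text \<open>Jacobson radical: intersection of all maximal submodules (= M if there are none).\<close>
definition Rad :: "('r,'c) ring_scheme \<Rightarrow> ('a,'m) ring_scheme \<Rightarrow> ('a \<Rightarrow> 'r \<Rightarrow> 'a) \<Rightarrow> 'a set" where
  "Rad R M act = {x \<in> carrier M. \<forall>K. maximal_sub R M act K \<longrightarrow> x \<in> K}"

definition direct_summand :: "('r,'c) ring_scheme \<Rightarrow> ('a,'m) ring_scheme \<Rightarrow> ('a \<Rightarrow> 'r \<Rightarrow> 'a) \<Rightarrow> 'a set \<Rightarrow> bool" where
  "direct_summand R M act D \<longleftrightarrow> submod R M act D \<and>
     (\<exists>D'. submod R M act D' \<and> msum M D D' = carrier M \<and> D \<inter> D' = {\<zero>\<^bsub>M\<^esub>})"

definition cyclic_sub :: "('r,'c) ring_scheme \<Rightarrow> ('a \<Rightarrow> 'r \<Rightarrow> 'a) \<Rightarrow> 'a \<Rightarrow> 'a set" where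
  "cyclic_sub R act x = {act x r | r. r \<in> carrier R}"

definition principally_semisimple :: "('r,'c) ring_scheme \<Rightarrow> ('a,'m) ring_scheme \<Rightarrow> ('a \<Rightarrow> 'r \<Rightarrow> 'a) \<Rightarrow> bool" where
  "principally_semisimple R M act \<longleftrightarrow>
     (\<forall>x\<in>carrier M. direct_summand R M act (cyclic_sub R act x))"

text \<open>Quotient module M/U: cosets U + x, with induced addition and action
  (the multiplicative record fields are junk and irrelevant).\<close>
definition quot_mod :: "('a,'m) ring_scheme \<Rightarrow> 'a set \<Rightarrow> 'a set ring" where
  "quot_mod M U = \<lparr>carrier = a_rcosets\<^bsub>M\<^esub> U, monoid.mult = (\<lambda>A B. A), monoid.one = U,
                   ring.zero = U, ring.add = set_add M\<rparr>"

definition quot_act :: "('a,'m) ring_scheme \<Rightarrow> ('a \<Rightarrow> 'r \<Rightarrow> 'a) \<Rightarrow> 'a set \<Rightarrow> 'a set \<Rightarrow> 'r \<Rightarrow> 'a set" where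
  "quot_act M act U C r = U +>\<^bsub>M\<^esub> act (SOME x. x \<in> C) r"

definition proj_image :: "('a,'m) ring_scheme \<Rightarrow> 'a set \<Rightarrow> 'a set \<Rightarrow> 'a set set" where
  "proj_image M U S = (\<lambda>s. U +>\<^bsub>M\<^esub> s) ` S"

definition beta_star :: "('r,'c) ring_scheme \<Rightarrow> ('a,'m) ring_scheme \<Rightarrow> ('a \<Rightarrow> 'r \<Rightarrow> 'a) \<Rightarrow> 'a set \<Rightarrow> 'a set \<Rightarrow> bool" where
  "beta_star R M act U V \<longleftrightarrow>
     small_sub R (quot_mod M U) (quot_act M act U) (proj_image M U (msum M U V)) \<and>
     small_sub R (quot_mod M V) (quot_act M act V) (proj_image M V (msum M U V))"

definition principally_Goldie_star_lifting :: "('r,'c) ring_scheme \<Rightarrow> ('a,'m) ring_scheme \<Rightarrow> ('a \<Rightarrow> 'r \<Rightarrow> 'a) \<Rightarrow> bool" where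
  "principally_Goldie_star_lifting R M act \<longleftrightarrow>
     (\<forall>x\<in>carrier M. \<exists>D. direct_summand R M act D \<and> beta_star R M act (cyclic_sub R act x) D)"

end

theory Submission
  imports Defs
begin

(* Fix x in M, put Y = xR and N = Rad(M).  Goldie*-lifting gives a decomposition
   M = D (+) D' with Y beta* D.  The two halves of beta* are used as follows.
   (1) (Y+D)/Y is small in M/Y and (Y+D) + (Y+D') = M, hence Y + D' = M.
   (2) For every maximal submodule L not containing D', the submodule D + (L n D') is
       maximal; since (Y+D)/D is small in M/D, Y lies in it.  A D'-component of an
       element lying in all these submodules lies in N, which yields:
       a in Y, b in D', a - b in N imply b in N.
   By (1) and (2), (Y+N)/N and (D'+N)/N are complementary in M/N, and (Y+N)/N is the
   cyclic submodule of M/N generated by x + N. *)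

section \<open>Right modules and their submodules\<close>

locale rmod = abelian_group +
  fixes R :: "('r,'c) ring_scheme" and act :: "'a \<Rightarrow> 'r \<Rightarrow> 'a"
  assumes right_module: "right_module R G act"
begin

lemma ring_R: "ring R"
  using right_module unfolding right_module_def by blast

lemma act_closed: "x \<in> carrier G \<Longrightarrow> r \<in> carrier R \<Longrightarrow> act x r \<in> carrier G"
  and act_add: "x \<in> carrier G \<Longrightarrow> y \<in> carrier G \<Longrightarrow> r \<in> carrier R \<Longrightarrow>
                act (x \<oplus> y) r = act x r \<oplus> act y r"
  and act_radd: "x \<in> carrier G \<Longrightarrow> r \<in> carrier R \<Longrightarrow> s \<in> carrier R \<Longrightarrow>
                 act x (r \<oplus>\<^bsub>R\<^esub> s) = act x r \<oplus> act x s"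
  and act_mult: "x \<in> carrier G \<Longrightarrow> r \<in> carrier R \<Longrightarrow> s \<in> carrier R \<Longrightarrow>
                 act x (r \<otimes>\<^bsub>R\<^esub> s) = act (act x r) s"
  using right_module unfolding right_module_def by blast+

lemma act_rzero: assumes x: "x \<in> carrier G" shows "act x \<zero>\<^bsub>R\<^esub> = \<zero>"
proof -
  interpret R: ring R by (rule ring_R)
  have "act x \<zero>\<^bsub>R\<^esub> = act x \<zero>\<^bsub>R\<^esub> \<oplus> act x \<zero>\<^bsub>R\<^esub>"
    using act_radd[OF x R.zero_closed R.zero_closed] by simp
  then show ?thesis using act_closed[OF x R.zero_closed] by simp
qed

lemma act_rneg:
  assumes x: "x \<in> carrier G" and r: "r \<in> carrier R"
  shows "act x (\<ominus>\<^bsub>R\<^esub> r) = \<ominus> act x r"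
proof -
  interpret R: ring R by (rule ring_R)
  have "act x (\<ominus>\<^bsub>R\<^esub> r) \<oplus> act x r = \<zero>"
    using act_radd[OF x R.a_inv_closed[OF r] r] act_rzero[OF x] r by (simp add: R.l_neg)
  then show ?thesis using act_closed x r R.a_inv_closed by (metis minus_equality)
qed

lemma submodD:
  assumes "submod R G act U"
  shows "U \<subseteq> carrier G" "\<zero> \<in> U" "\<And>x y. x \<in> U \<Longrightarrow> y \<in> U \<Longrightarrow> x \<oplus> y \<in> U"
    "\<And>x. x \<in> U \<Longrightarrow> \<ominus> x \<in> U" "\<And>x r. x \<in> U \<Longrightarrow> r \<in> carrier R \<Longrightarrow> act x r \<in> U"
  using assms unfolding submod_def by auto

lemma submod_diff: "submod R G act U \<Longrightarrow> x \<in> U \<Longrightarrow> y \<in> U \<Longrightarrow> x \<oplus> \<ominus> y \<in> U"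
  using submodD(3,4) by blast

lemma submod_abelian_subgroup: "submod R G act U \<Longrightarrow> abelian_subgroup U G"
  using submodD
  by (intro abelian_subgroupI3 additive_subgroup.intro add.subgroupI abelian_group_axioms) auto

lemma submod_Int: "submod R G act U \<Longrightarrow> submod R G act V \<Longrightarrow> submod R G act (U \<inter> V)"
  unfolding submod_def by auto

lemma submod_msum:
  assumes U: "submod R G act U" and V: "submod R G act V"
  shows "submod R G act (msum G U V)"
  unfolding submod_def
proof (intro conjI ballI)
  note u = submodD[OF U] and v = submodD[OF V]
  show "msum G U V \<subseteq> carrier G" using u(1) v(1) unfolding msum_def by auto
  show "\<zero> \<in> msum G U V" using u(2) v(2) unfolding msum_def by force
  fix a assume "a \<in> msum G U V"
  then obtain x y where a: "a = x \<oplus> y" "x \<in> U" "y \<in> V" unfolding msum_def by blast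
  then have c: "x \<in> carrier G" "y \<in> carrier G" using u(1) v(1) by auto
  have "\<ominus> a = \<ominus> x \<oplus> \<ominus> y" using a c by (simp add: minus_add)
  then show "\<ominus> a \<in> msum G U V" using a u(4) v(4) unfolding msum_def by blast
  {
    fix b assume "b \<in> msum G U V"
    then obtain x' y' where b: "b = x' \<oplus> y'" "x' \<in> U" "y' \<in> V" unfolding msum_def by blast
    moreover have "x' \<in> carrier G" "y' \<in> carrier G" using b u(1) v(1) by auto
    ultimately have "a \<oplus> b = (x \<oplus> x') \<oplus> (y \<oplus> y')" using a c by (simp add: a_ac)
    then show "a \<oplus> b \<in> msum G U V" using a b u(3) v(3) unfolding msum_def by blast
  }
  fix r assume r: "r \<in> carrier R"
  have "act a r = act x r \<oplus> act y r" using a c r act_add by simp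
  then show "act a r \<in> msum G U V" using a u(5) v(5) r unfolding msum_def by blast
qed

lemma msum_left: "submod R G act V \<Longrightarrow> U \<subseteq> carrier G \<Longrightarrow> U \<subseteq> msum G U V"
  unfolding msum_def by (force dest: submodD(2))

lemma msum_right: "submod R G act U \<Longrightarrow> V \<subseteq> carrier G \<Longrightarrow> V \<subseteq> msum G U V"
  unfolding msum_def by (force dest: submodD(2))

lemma msum_mono: "A \<subseteq> A' \<Longrightarrow> B \<subseteq> B' \<Longrightarrow> msum G A B \<subseteq> msum G A' B'"
  unfolding msum_def by blast

lemma cyclic_submod:
  assumes x: "x \<in> carrier G"
  shows "submod R G act (cyclic_sub R act x)"
  unfolding submod_def cyclic_sub_def
proof (intro conjI ballI)
  interpret R: ring R by (rule ring_R)
  show "{act x r |r. r \<in> carrier R} \<subseteq> carrier G" using act_closed x by auto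
  show "\<zero> \<in> {act x r |r. r \<in> carrier R}" using act_rzero[OF x] R.zero_closed by force
  fix a assume "a \<in> {act x r |r. r \<in> carrier R}"
  then obtain r where a: "a = act x r" "r \<in> carrier R" by blast
  have "\<ominus> a = act x (\<ominus>\<^bsub>R\<^esub> r)" using a act_rneg[OF x] by simp
  then show "\<ominus> a \<in> {act x r |r. r \<in> carrier R}" using R.add.inv_closed[OF a(2)] by blast
  show "act a s \<in> {act x r |r. r \<in> carrier R}" if s: "s \<in> carrier R" for s
    using a act_mult[OF x a(2) s] R.m_closed[OF a(2) s] by force
  fix b assume "b \<in> {act x r |r. r \<in> carrier R}"
  then obtain s where b: "b = act x s" "s \<in> carrier R" by blast
  have "a \<oplus> b = act x (r \<oplus>\<^bsub>R\<^esub> s)" using a b act_radd[OF x a(2) b(2)] by simp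
  then show "a \<oplus> b \<in> {act x r |r. r \<in> carrier R}" using R.add.m_closed[OF a(2) b(2)] by blast
qed

lemma Rad_submod: "submod R G act (Rad R G act)"
  unfolding Rad_def maximal_sub_def submod_def using act_closed by auto

lemma maximal_submod: "maximal_sub R G act L \<Longrightarrow> submod R G act L"
  unfolding maximal_sub_def by blast

lemma maximal_msum_full:
  assumes L: "maximal_sub R G act L" and A: "submod R G act A" and nA: "\<not> A \<subseteq> L"
  shows "msum G A L = carrier G"
proof -
  have "L \<subseteq> msum G A L" using msum_right[OF A] submodD(1)[OF maximal_submod[OF L]] .
  moreover have "A \<subseteq> msum G A L" using msum_left[OF maximal_submod[OF L] submodD(1)[OF A]] .
  ultimately show ?thesis
    using L nA submod_msum[OF A maximal_submod[OF L]] unfolding maximal_sub_def by blast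
qed

end

section \<open>Quotient modules and projections of submodules\<close>

locale rquot = rmod +
  fixes U assumes U: "submod R G act U"
begin

sublocale U: abelian_subgroup U G by (rule submod_abelian_subgroup[OF U])

lemma U_sub: "U \<subseteq> carrier G" using submodD(1)[OF U] .

lemma q_carrier: "carrier (quot_mod G U) = a_rcosets U"
  and q_zero: "\<zero>\<^bsub>quot_mod G U\<^esub> = U"
  and q_add: "A \<oplus>\<^bsub>quot_mod G U\<^esub> B = A <+> B"
  by (simp_all add: quot_mod_def)

lemma rcos_in: "a \<in> carrier G \<Longrightarrow> U +> a \<in> a_rcosets U"
  using a_rcosetsI U_sub by blast

lemma rcosets_elem: "C \<in> a_rcosets U \<Longrightarrow> \<exists>a\<in>carrier G. C = U +> a"
  by (auto simp: A_RCOSETS_def RCOSETS_def a_r_coset_def)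

lemma rcos_eq:
  assumes a: "a \<in> carrier G" and b: "b \<in> carrier G"
  shows "U +> a = U +> b \<longleftrightarrow> a \<oplus> \<ominus> b \<in> U"
  using U.a_rcos_module[OF b a] U.a_rcos_self[OF a] U.a_repr_independence'[OF _ b] by auto

lemma rcos_eq_U: "a \<in> carrier G \<Longrightarrow> U +> a = U \<longleftrightarrow> a \<in> U"
  using U.a_rcos_self U.a_rcos_const by metis

lemma quot_act_rcos:
  assumes a: "a \<in> carrier G" and r: "r \<in> carrier R"
  shows "quot_act G act U (U +> a) r = U +> act a r"
proof -
  define y where "y = (SOME y. y \<in> U +> a)"
  have "y \<in> U +> a" unfolding y_def using U.a_rcos_self[OF a] by (rule someI)
  then obtain u where u: "u \<in> U" "y = u \<oplus> a" by (auto simp: a_r_coset_def r_coset_def)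
  have uc: "u \<in> carrier G" using u(1) U_sub by blast
  have "act y r = act u r \<oplus> act a r" using act_add[OF uc a r] u(2) by simp
  moreover have "act u r \<in> U" using submodD(5)[OF U u(1) r] .
  ultimately have "act y r \<oplus> \<ominus> act a r \<in> U"
    using uc act_closed[OF uc r] act_closed[OF a r] by (simp add: a_assoc r_neg)
  then show ?thesis
    unfolding quot_act_def y_def[symmetric]
    using rcos_eq act_closed[OF a r] act_closed[OF uc r] \<open>act y r = _\<close> by auto
qed

lemma quot_inv_rcos:
  assumes a: "a \<in> carrier G"
  shows "a_inv (quot_mod G U) (U +> a) = U +> \<ominus> a"
proof -
  interpret Q: group "G A_Mod U" by (rule U.a_factorgroup_is_group)
  have "a_inv (quot_mod G U) (U +> a) = inv\<^bsub>G A_Mod U\<^esub> (U +> a)"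
    by (simp add: a_inv_def m_inv_def A_FactGroup_def' quot_mod_def)
  also have "\<dots> = U +> \<ominus> a"
  proof (rule Q.inv_equality)
    show "(U +> \<ominus> a) \<otimes>\<^bsub>G A_Mod U\<^esub> (U +> a) = \<one>\<^bsub>G A_Mod U\<^esub>"
      using a U.a_rcos_sum[of "\<ominus> a" a] rcos_eq_U[of "\<ominus> a \<oplus> a"] submodD(2)[OF U]
      by (simp add: A_FactGroup_def' l_neg)
    show "U +> a \<in> carrier (G A_Mod U)" "U +> \<ominus> a \<in> carrier (G A_Mod U)"
      using a rcos_in by (auto simp: A_FactGroup_def')
  qed
  finally show ?thesis .
qed

lemma proj_image_carrier: "proj_image G U (carrier G) = carrier (quot_mod G U)"
  unfolding proj_image_def q_carrier using rcosets_elem rcos_in by blast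

lemma proj_image_submod:
  assumes S: "submod R G act S"
  shows "submod R (quot_mod G U) (quot_act G act U) (proj_image G U S)"
  unfolding submod_def
proof (intro conjI ballI)
  note s = submodD[OF S]
  show "proj_image G U S \<subseteq> carrier (quot_mod G U)"
    unfolding proj_image_def q_carrier using s(1) rcos_in by blast
  show "\<zero>\<^bsub>quot_mod G U\<^esub> \<in> proj_image G U S"
    unfolding q_zero proj_image_def using s(2) rcos_eq_U[of \<zero>] submodD(2)[OF U] by force
  fix A assume "A \<in> proj_image G U S"
  then obtain a where a: "a \<in> S" "A = U +> a" unfolding proj_image_def by blast
  have ac: "a \<in> carrier G" using a(1) s(1) by blast
  show "a_inv (quot_mod G U) A \<in> proj_image G U S"
    using a s(4) quot_inv_rcos[OF ac] unfolding proj_image_def by simp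
  show "quot_act G act U A r \<in> proj_image G U S" if r: "r \<in> carrier R" for r
    using a s(5)[OF a(1) r] quot_act_rcos[OF ac r] unfolding proj_image_def by simp
  fix B assume "B \<in> proj_image G U S"
  then obtain b where b: "b \<in> S" "B = U +> b" unfolding proj_image_def by blast
  have "A \<oplus>\<^bsub>quot_mod G U\<^esub> B = U +> (a \<oplus> b)"
    unfolding q_add a(2) b(2) using a(1) b(1) s(1) by (simp add: U.a_rcos_sum subsetD)
  then show "A \<oplus>\<^bsub>quot_mod G U\<^esub> B \<in> proj_image G U S"
    using a(1) b(1) s(3) unfolding proj_image_def by blast
qed

lemma proj_image_msum:
  assumes S: "S \<subseteq> carrier G" and T: "T \<subseteq> carrier G"
  shows "msum (quot_mod G U) (proj_image G U S) (proj_image G U T) = proj_image G U (msum G S T)"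
proof -
  have "\<And>a b. a \<in> S \<Longrightarrow> b \<in> T \<Longrightarrow> (U +> a) <+> (U +> b) = U +> (a \<oplus> b)"
    using U.a_rcos_sum S T by blast
  then show ?thesis unfolding msum_def proj_image_def q_add by blast
qed

lemma proj_image_full:
  assumes S: "submod R G act S" and US: "U \<subseteq> S"
    and full: "proj_image G U S = carrier (quot_mod G U)"
  shows "S = carrier G"
proof
  show "S \<subseteq> carrier G" using submodD(1)[OF S] .
  show "carrier G \<subseteq> S"
  proof
    fix m assume m: "m \<in> carrier G"
    then have "U +> m \<in> proj_image G U S" using full rcos_in q_carrier by auto
    then obtain s where s: "s \<in> S" "U +> m = U +> s" unfolding proj_image_def by blast
    then have "m \<oplus> \<ominus> s \<in> S" using rcos_eq m submodD(1)[OF S] US by blast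
    then have "(m \<oplus> \<ominus> s) \<oplus> s \<in> S" using submodD(3)[OF S] s(1) by blast
    moreover have "s \<in> carrier G" using s(1) submodD(1)[OF S] by blast
    ultimately show "m \<in> S" using m by (simp add: a_assoc l_neg)
  qed
qed

lemma small_proj_image_cancel:
  assumes small: "small_sub R (quot_mod G U) (quot_act G act U) (proj_image G U A)"
    and A: "A \<subseteq> carrier G" and B: "submod R G act B" and UB: "U \<subseteq> B"
    and AB: "msum G A B = carrier G"
  shows "B = carrier G"
proof -
  have "msum (quot_mod G U) (proj_image G U A) (proj_image G U B) = carrier (quot_mod G U)"
    using proj_image_msum[OF A submodD(1)[OF B]] AB proj_image_carrier by simp
  then have "proj_image G U B = carrier (quot_mod G U)"
    using small proj_image_submod[OF B] unfolding small_sub_def by blast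
  then show ?thesis using proj_image_full[OF B UB] by blast
qed

lemma cyclic_sub_rcos:
  assumes x: "x \<in> carrier G"
  shows "cyclic_sub R (quot_act G act U) (U +> x) = proj_image G U (cyclic_sub R act x)"
  unfolding cyclic_sub_def proj_image_def using quot_act_rcos[OF x] by auto

lemma proj_image_direct_summand:
  assumes Y: "submod R G act Y" and C: "submod R G act C"
    and sum: "msum G Y C = carrier G"
    and sep: "\<And>a b. a \<in> Y \<Longrightarrow> b \<in> C \<Longrightarrow> a \<oplus> \<ominus> b \<in> U \<Longrightarrow> b \<in> U"
  shows "direct_summand R (quot_mod G U) (quot_act G act U) (proj_image G U Y)"
  unfolding direct_summand_def
proof (intro conjI exI[of _ "proj_image G U C"])
  note y = submodD[OF Y] and c = submodD[OF C]
  show "submod R (quot_mod G U) (quot_act G act U) (proj_image G U Y)"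
    "submod R (quot_mod G U) (quot_act G act U) (proj_image G U C)"
    using proj_image_submod Y C by blast+
  show "msum (quot_mod G U) (proj_image G U Y) (proj_image G U C) = carrier (quot_mod G U)"
    using proj_image_msum[OF y(1) c(1)] sum proj_image_carrier by simp
  show "proj_image G U Y \<inter> proj_image G U C = {\<zero>\<^bsub>quot_mod G U\<^esub>}"
  proof
    show "proj_image G U Y \<inter> proj_image G U C \<subseteq> {\<zero>\<^bsub>quot_mod G U\<^esub>}"
    proof
      fix A assume "A \<in> proj_image G U Y \<inter> proj_image G U C"
      then obtain a b where ab: "a \<in> Y" "b \<in> C" "A = U +> a" "A = U +> b"
        unfolding proj_image_def by blast
      then have "b \<in> U" using sep rcos_eq y(1) c(1) by blast
      then show "A \<in> {\<zero>\<^bsub>quot_mod G U\<^esub>}" using ab rcos_eq_U c(1) q_zero by auto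
    qed
    show "{\<zero>\<^bsub>quot_mod G U\<^esub>} \<subseteq> proj_image G U Y \<inter> proj_image G U C"
      unfolding q_zero proj_image_def using y(2) c(2) rcos_eq_U[of \<zero>] submodD(2)[OF U] by force
  qed
qed

end

section \<open>Decompositions and the maximal submodules \<open>D + (L \<inter> D')\<close>\<close>

locale rdecomp = rmod +
  fixes D D'
  assumes D: "submod R G act D" and D': "submod R G act D'"
    and D_sum: "msum G D D' = carrier G" and D_int: "D \<inter> D' = {\<zero>}"
begin

lemma decompose:
  assumes "m \<in> carrier G"
  obtains d e where "d \<in> D" "e \<in> D'" "m = d \<oplus> e"
  using assms D_sum unfolding msum_def by blast

lemma decompose_unique:
  assumes d: "d \<in> D" "d2 \<in> D" and e: "e \<in> D'" "e2 \<in> D'" and eq: "d \<oplus> e = d2 \<oplus> e2"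
  shows "e = e2"
proof -
  have c: "d \<in> carrier G" "d2 \<in> carrier G" "e \<in> carrier G" "e2 \<in> carrier G"
    using d e submodD(1)[OF D] submodD(1)[OF D'] by auto
  have "\<ominus> d2 \<oplus> (d \<oplus> e) \<oplus> \<ominus> e = \<ominus> d2 \<oplus> (d2 \<oplus> e2) \<oplus> \<ominus> e" using eq by simp
  then have "\<ominus> d2 \<oplus> d = e2 \<oplus> \<ominus> e" using c by (simp add: a_assoc r_neg r_neg1)
  moreover have "\<ominus> d2 \<oplus> d \<in> D" using d submodD(3,4)[OF D] by blast
  moreover have "e2 \<oplus> \<ominus> e \<in> D'" using e submod_diff[OF D'] by blast
  ultimately have "e2 \<oplus> \<ominus> e = \<zero>" using D_int by auto
  then have "e2 = \<zero> \<oplus> e" using c by (metis a_assoc l_neg r_zero a_inv_closed)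
  then show ?thesis using c by simp
qed

lemma D_plus_mem_iff:
  assumes L: "submod R G act L" and d: "d \<in> D" and e: "e \<in> D'"
  shows "d \<oplus> e \<in> msum G D (L \<inter> D') \<longleftrightarrow> e \<in> L"
proof
  assume "d \<oplus> e \<in> msum G D (L \<inter> D')"
  then obtain d2 l where "d2 \<in> D" "l \<in> L \<inter> D'" "d \<oplus> e = d2 \<oplus> l" unfolding msum_def by blast
  then show "e \<in> L" using decompose_unique[OF d _ e] by blast
next
  assume "e \<in> L"
  then show "d \<oplus> e \<in> msum G D (L \<inter> D')" using d e unfolding msum_def by blast
qed

text \<open>If \<open>L\<close> is maximal and does not contain \<open>D'\<close>, then \<open>D + (L \<inter> D')\<close> is maximal
  (it is the preimage of \<open>L \<inter> D'\<close>, a maximal submodule of \<open>D'\<close>, under the projection).\<close>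
lemma maximal_D_plus:
  assumes L: "maximal_sub R G act L" and nL: "\<not> D' \<subseteq> L"
  shows "maximal_sub R G act (msum G D (L \<inter> D'))"
  unfolding maximal_sub_def
proof (intro conjI allI impI)
  let ?T = "msum G D (L \<inter> D')"
  have Ls: "submod R G act L" using maximal_submod[OF L] .
  show T: "submod R G act ?T" using submod_msum[OF D submod_Int[OF Ls D']] .
  have DT: "D \<subseteq> ?T" using msum_left[OF submod_Int[OF Ls D'] submodD(1)[OF D]] .
  obtain f where f: "f \<in> D'" "f \<notin> L" using nL by blast
  have "\<zero> \<oplus> f \<notin> ?T" using D_plus_mem_iff[OF Ls submodD(2)[OF D] f(1)] f(2) by blast
  then show "?T \<noteq> carrier G" using f(1) submodD(1)[OF D'] by auto
  fix K assume K: "submod R G act K \<and> ?T \<subseteq> K"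
  note k = submodD[OF conjunct1[OF K]]
  have "K = carrier G" if ne: "K \<noteq> ?T"
  proof -
    obtain z where z: "z \<in> K" "z \<notin> ?T" using ne K by blast
    then obtain d e where de: "d \<in> D" "e \<in> D'" "z = d \<oplus> e" using decompose k(1) by blast
    have dc: "d \<in> carrier G" "e \<in> carrier G" using de submodD(1)[OF D] submodD(1)[OF D'] by auto
    have "e \<notin> L" using D_plus_mem_iff[OF Ls de(1,2)] z(2) de(3) by blast
    moreover have "e \<in> K"
    proof -
      have "\<ominus> d \<oplus> z \<in> K" using k(3,4) de(1) DT K z(1) by blast
      then show ?thesis using de(3) dc by (simp add: r_neg1)
    qed
    ultimately have full: "msum G (K \<inter> D') L = carrier G"
      using maximal_msum_full[OF L submod_Int[OF conjunct1[OF K] D']] de(2) by blast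
    show ?thesis
    proof
      show "K \<subseteq> carrier G" using k(1) .
      show "carrier G \<subseteq> K"
      proof
        fix m assume "m \<in> carrier G"
        then obtain d1 e1 where de1: "d1 \<in> D" "e1 \<in> D'" "m = d1 \<oplus> e1" using decompose by blast
        then have "e1 \<in> carrier G" using submodD(1)[OF D'] by blast
        then obtain k' l where kl: "k' \<in> K \<inter> D'" "l \<in> L" "e1 = k' \<oplus> l"
          using full unfolding msum_def by blast
        have c: "d1 \<in> carrier G" "k' \<in> carrier G" "l \<in> carrier G"
          using de1(1) kl submodD(1)[OF D] k(1) submodD(1)[OF Ls] by auto
        have "l = \<ominus> k' \<oplus> e1" using kl(3) c by (simp add: r_neg1)
        then have "l \<in> D'" using kl(1) de1(2) submodD(3,4)[OF D'] by auto
        then have "d1 \<oplus> l \<in> K" using D_plus_mem_iff[OF Ls de1(1)] kl(2) K by blast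
        moreover have "m = (d1 \<oplus> l) \<oplus> k'" using de1(3) kl(3) c by (simp add: a_ac)
        ultimately show "m \<in> K" using k(3) kl(1) by auto
      qed
    qed
  qed
  then show "K = ?T \<or> K = carrier G" by blast
qed

lemma component_in_Rad:
  assumes z: "\<And>L. maximal_sub R G act L \<Longrightarrow> \<not> D' \<subseteq> L \<Longrightarrow> z \<in> msum G D (L \<inter> D')"
    and d: "d \<in> D" and e: "e \<in> D'" and zde: "z = d \<oplus> e"
  shows "e \<in> Rad R G act"
  unfolding Rad_def
proof (intro CollectI conjI allI impI)
  show "e \<in> carrier G" using e submodD(1)[OF D'] by blast
  fix L assume L: "maximal_sub R G act L"
  show "e \<in> L"
  proof (cases "D' \<subseteq> L")
    case True then show ?thesis using e by blast
  next
    case False then show ?thesis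
      using z[OF L] zde D_plus_mem_iff[OF maximal_submod[OF L] d e] by blast
  qed
qed

section \<open>Consequences of \<open>Y \<beta>* D\<close> for a direct summand \<open>D\<close>\<close>

lemma beta_star_sum_complement:
  assumes Y: "submod R G act Y"
    and small: "small_sub R (quot_mod G Y) (quot_act G act Y) (proj_image G Y (msum G Y D))"
  shows "msum G Y D' = carrier G"
proof -
  interpret QY: rquot G R act Y by unfold_locales (rule Y)
  have YD: "submod R G act (msum G Y D)" and YD': "submod R G act (msum G Y D')"
    using submod_msum Y D D' by blast+
  have "msum G (msum G Y D) (msum G Y D') = carrier G"
  proof
    show "msum G (msum G Y D) (msum G Y D') \<subseteq> carrier G"
      using submodD(1)[OF submod_msum[OF YD YD']] .
    show "carrier G \<subseteq> msum G (msum G Y D) (msum G Y D')"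
      using D_sum msum_mono[OF msum_right[OF Y submodD(1)[OF D]] msum_right[OF Y submodD(1)[OF D']]]
      by simp
  qed
  then show ?thesis
    using QY.small_proj_image_cancel[OF small submodD(1)[OF YD] YD'
        msum_left[OF D' submodD(1)[OF Y]]] by blast
qed

lemma beta_star_in_D_plus:
  assumes Y: "submod R G act Y"
    and small: "small_sub R (quot_mod G D) (quot_act G act D) (proj_image G D (msum G Y D))"
    and L: "maximal_sub R G act L" and nL: "\<not> D' \<subseteq> L"
  shows "Y \<subseteq> msum G D (L \<inter> D')"
proof (rule ccontr)
  assume nY: "\<not> Y \<subseteq> msum G D (L \<inter> D')"
  interpret QD: rquot G R act D by unfold_locales (rule D)
  let ?T = "msum G D (L \<inter> D')"
  have T: "maximal_sub R G act ?T" using maximal_D_plus[OF L nL] .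
  have YD: "submod R G act (msum G Y D)" using submod_msum[OF Y D] .
  have "\<not> msum G Y D \<subseteq> ?T" using nY msum_left[OF D submodD(1)[OF Y]] by blast
  then have "msum G (msum G Y D) ?T = carrier G" using maximal_msum_full[OF T YD] by blast
  then have "?T = carrier G"
    using QD.small_proj_image_cancel[OF small submodD(1)[OF YD] maximal_submod[OF T]]
      msum_left[OF submod_Int[OF maximal_submod[OF L] D'] submodD(1)[OF D]] by blast
  then show False using T unfolding maximal_sub_def by blast
qed

lemma beta_star_Rad_separation:
  assumes Y: "submod R G act Y"
    and small: "small_sub R (quot_mod G D) (quot_act G act D) (proj_image G D (msum G Y D))"
    and a: "a \<in> Y" and b: "b \<in> D'" and ab: "a \<oplus> \<ominus> b \<in> Rad R G act"
  shows "b \<in> Rad R G act"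
proof -
  let ?N = "Rad R G act"
  have in_all: "z \<in> msum G D (L \<inter> D')"
    if z: "z \<in> Y \<union> ?N" and L: "maximal_sub R G act L" and nL: "\<not> D' \<subseteq> L" for z L
    using z beta_star_in_D_plus[OF Y small L nL] maximal_D_plus[OF L nL] unfolding Rad_def by blast
  have c: "a \<in> carrier G" "b \<in> carrier G" using a b submodD(1)[OF Y] submodD(1)[OF D'] by auto
  obtain d e where de: "d \<in> D" "e \<in> D'" "a \<oplus> \<ominus> b = d \<oplus> e"
    using decompose[of "a \<oplus> \<ominus> b"] c by blast
  have dc: "d \<in> carrier G" "e \<in> carrier G" using de submodD(1)[OF D] submodD(1)[OF D'] by auto
  have eN: "e \<in> ?N" by (rule component_in_Rad[OF in_all[OF UnI2[OF ab]] de])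
  have "a = (a \<oplus> \<ominus> b) \<oplus> b" using c by (simp add: a_assoc l_neg)
  also have "\<dots> = d \<oplus> (e \<oplus> b)" using de(3) dc c by (simp add: a_assoc)
  finally have "e \<oplus> b \<in> ?N"
    using component_in_Rad[OF in_all[OF UnI1[OF a]] de(1) submodD(3)[OF D' de(2) b]] by simp
  then have "\<ominus> e \<oplus> (e \<oplus> b) \<in> ?N" using eN submodD(3,4)[OF Rad_submod] by blast
  then show ?thesis using dc c by (simp add: r_neg1)
qed

end

lemma (in rmod) Goldie_star_cyclic_image_summand:
  assumes P: "principally_Goldie_star_lifting R G act" and x: "x \<in> carrier G"
  shows "direct_summand R (quot_mod G (Rad R G act)) (quot_act G act (Rad R G act))
           (proj_image G (Rad R G act) (cyclic_sub R act x))"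
proof -
  let ?Y = "cyclic_sub R act x"
  interpret Q: rquot G R act "Rad R G act" by unfold_locales (rule Rad_submod)
  have Y: "submod R G act ?Y" using cyclic_submod[OF x] .
  obtain D where "direct_summand R G act D" and "beta_star R G act ?Y D"
    using P x unfolding principally_Goldie_star_lifting_def by blast
  then obtain D' where D: "submod R G act D" and D': "submod R G act D'"
    and sum: "msum G D D' = carrier G" and int: "D \<inter> D' = {\<zero>}"
    and small_Y: "small_sub R (quot_mod G ?Y) (quot_act G act ?Y) (proj_image G ?Y (msum G ?Y D))"
    and small_D: "small_sub R (quot_mod G D) (quot_act G act D) (proj_image G D (msum G ?Y D))"
    unfolding direct_summand_def beta_star_def by blast
  interpret Dec: rdecomp G R act D D' by unfold_locales (rule D D' sum int)+
  show ?thesis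
    by (rule Q.proj_image_direct_summand[OF Y D' Dec.beta_star_sum_complement[OF Y small_Y]
          Dec.beta_star_Rad_separation[OF Y small_D]])
qed

theorem proposition3p14:
  fixes R :: "('r,'c) ring_scheme" and M :: "('a,'m) ring_scheme" and act :: "'a \<Rightarrow> 'r \<Rightarrow> 'a"
  assumes "right_module R M act"
    and "principally_Goldie_star_lifting R M act"
    and "small_sub R M act (Rad R M act)"
  shows "principally_semisimple R (quot_mod M (Rad R M act)) (quot_act M act (Rad R M act))"
proof -
  have "abelian_group M" using assms(1) unfolding right_module_def by blast
  then have rm: "rmod M R act" by (rule rmod.intro[OF _ rmod_axioms.intro[OF assms(1)]])
  interpret Q: rquot M R act "Rad R M act"
    by (rule rquot.intro[OF rm rquot_axioms.intro[OF rmod.Rad_submod[OF rm]]])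
  show ?thesis unfolding principally_semisimple_def
  proof
    fix C assume "C \<in> carrier (quot_mod M (Rad R M act))"
    then obtain x where x: "x \<in> carrier M" "C = Rad R M act +>\<^bsub>M\<^esub> x"
      using Q.rcosets_elem Q.q_carrier by auto
    then show "direct_summand R (quot_mod M (Rad R M act)) (quot_act M act (Rad R M act))
                 (cyclic_sub R (quot_act M act (Rad R M act)) C)"
      using rmod.Goldie_star_cyclic_image_summand[OF rm assms(2) x(1)] Q.cyclic_sub_rcos[OF x(1)]
      by simp
  qed
qed

end
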